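(* Let $0\le f\le\lfloor n/2\rfloor$ and $d\in\mathcal D_{\nu_f}$. Suppose $d=d's_j$ for some $1\le j\le n-1$ and $d'\in\mathfrak S_n$ with $\ell(d)=\ell(d')+1$. Then $d'\in\mathcal D_{\nu_f}$.
   Context: $\mathfrak S_n$ acts on $\{1,\dots,n\}$ on the right: $(a)(\sigma\tau)=((a)\sigma)\tau$; $s_j=(j,j+1)$ and $\ell$ is the Coxeter length. For $0\le f\le\lfloor n/2\rfloor$ let $\nu_f=((2^f),(n-2f))$, a bipartition of $n$ (first component $f$ rows of length $2$, second component one row of length $n-2f$), and let $\mathfrak t^{\nu_f}$ be the bitableau with $1,\dots,n$ entered in order along successive rows of the first component and then along the row of the second component. For $d\in\mathfrak S_n$, $\mathfrak t^{\nu_f}d$ is obtained by replacing each entry $a$ by $(a)d$. $\mathcal D_{\nu_f}$ is the set of $d\in\mathfrak S_n$ such that $\mathfrak t^{\nu_f}d$ is row standard (entries increase along each row of each component) and the first column of its first component increases from top to bottom. *)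

theory Defs
  imports "HOL-Combinatorics.Combinatorics"
begin

text \<open>The symmetric group acts on the RIGHT: (a)(sigma tau) = ((a)sigma)tau,
  so the product sigma tau corresponds to the function composition tau o sigma.\<close>

definition rmult :: "(nat \<Rightarrow> nat) \<Rightarrow> (nat \<Rightarrow> nat) \<Rightarrow> (nat \<Rightarrow> nat)" where
  "rmult \<sigma> \<tau> = \<tau> \<circ> \<sigma>"

definition s :: "nat \<Rightarrow> nat \<Rightarrow> nat" where
  "s j = Transposition.transpose j (Suc j)"

fun word_perm :: "nat list \<Rightarrow> nat \<Rightarrow> nat" where
  "word_perm [] = id"
| "word_perm (j # js) = rmult (s j) (word_perm js)"

definition coxeter_length :: "nat \<Rightarrow> (nat \<Rightarrow> nat) \<Rightarrow> nat" where
  "coxeter_length n w =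
     (LEAST k. \<exists>js. length js = k \<and> set js \<subseteq> {1..<n} \<and> word_perm js = w)"

text \<open>Bitableaux: a pair of components, each a list of rows (lists of entries).\<close>
type_synonym bitableau = "nat list list \<times> nat list list"

text \<open>t^{nu_f} for nu_f = ((2^f),(n-2f)).\<close>
definition t_nu :: "nat \<Rightarrow> nat \<Rightarrow> bitableau" where
  "t_nu n f = ([[2*i+1, 2*i+2]. i \<leftarrow> [0..<f]], [[2*f+1..<n+1]])"

definition tab_act :: "bitableau \<Rightarrow> (nat \<Rightarrow> nat) \<Rightarrow> bitableau" where
  "tab_act t d = (map (map d) (fst t), map (map d) (snd t))"

definition row_standard :: "bitableau \<Rightarrow> bool" where
  "row_standard t \<longleftrightarrow> (\<forall>r \<in> set (fst t) \<union> set (snd t). sorted_wrt (<) r)"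

definition first_col_increasing :: "bitableau \<Rightarrow> bool" where
  "first_col_increasing t \<longleftrightarrow> sorted_wrt (<) (map hd (fst t))"

definition D_nu :: "nat \<Rightarrow> nat \<Rightarrow> (nat \<Rightarrow> nat) set" where
  "D_nu n f = {d. d permutes {1..n} \<and> row_standard (tab_act (t_nu n f) d)
                  \<and> first_col_increasing (tab_act (t_nu n f) d)}"

end

theory Submission
  imports Defs
begin

text \<open>The Coxeter length of a permutation of {1..n} is its number of inversions.
  Composing with s_j on the left toggles exactly the one pair of positions carrying the values
  j and j+1, so l(d' s_j) = l(d') + 1 means that j stands to the left of j+1 in d'.
  Then every ascent of d = d' s_j (positions x < y with d x < d y) is an ascent of d', and
  membership in D_nu asks only that certain increasing sequences of positions, the rows and the
  first column of t^nu, be mapped to increasing sequences.\<close>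

definition inversions :: "nat \<Rightarrow> (nat \<Rightarrow> nat) \<Rightarrow> (nat \<times> nat) set" where
  "inversions n w = {(a, b). a \<in> {1..n} \<and> b \<in> {1..n} \<and> a < b \<and> w b < w a}"

lemma finite_inversions: "finite (inversions n w)"
  by (rule finite_subset[of _ "{1..n} \<times> {1..n}"]) (auto simp: inversions_def)

lemma s_s [simp]: "s j (s j x) = x"
  by (simp add: s_def)

lemma s_simps [simp]: "s j j = Suc j" "s j (Suc j) = j"
  by (simp_all add: s_def)

lemma s_less_s_iff:
  assumes "{x, y} \<noteq> {j, Suc j}"
  shows "s j x < s j y \<longleftrightarrow> x < y"
proof -
  have "\<not> (x = j \<and> y = Suc j) \<and> \<not> (x = Suc j \<and> y = j)"
    using assms by auto
  then show ?thesis
    by (auto simp: s_def transpose_def)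
qed

lemma inj_s: "inj (s j)"
  unfolding s_def by (rule inj_transpose)

lemma s_permutes: "1 \<le> j \<Longrightarrow> j < n \<Longrightarrow> s j permutes {1..n}"
  unfolding s_def by (rule permutes_swap_id) auto

lemma word_perm_snoc: "word_perm (js @ [j]) = s j \<circ> word_perm js"
  by (induction js) (auto simp: rmult_def)

lemma adjacent_values_pair:
  fixes w :: "'a::linorder \<Rightarrow> nat"
  assumes "inj w" "w p = j" "w q = Suc j" "p < q" "a < b" "{w a, w b} = {j, Suc j}"
  shows "(a, b) = (p, q)"
proof -
  have "w a = w p \<and> w b = w q \<or> w a = w q \<and> w b = w p"
    using assms(2,3,6) by (auto simp: doubleton_eq_iff)
  then show ?thesis
    using assms(4,5) by (auto simp: inj_eq[OF assms(1)])
qed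

lemma inversions_s_comp:
  assumes "inj w" "w p = j" "w q = Suc j" "p < q" "p \<in> {1..n}" "q \<in> {1..n}"
  shows "inversions n (s j \<circ> w) = insert (p, q) (inversions n w)" "(p, q) \<notin> inversions n w"
proof -
  have "s j (w b) < s j (w a) \<longleftrightarrow> w b < w a" if "a < b" "(a, b) \<noteq> (p, q)" for a b
  proof -
    have "{w b, w a} \<noteq> {j, Suc j}"
      using adjacent_values_pair[OF assms(1-4) that(1)] that(2) by (auto simp: insert_commute)
    then show ?thesis by (rule s_less_s_iff)
  qed
  then have "(a, b) \<in> inversions n (s j \<circ> w) \<longleftrightarrow> (a, b) \<in> insert (p, q) (inversions n w)" for a b
    using assms by (cases "(a, b) = (p, q)") (auto simp: inversions_def)
  then show "inversions n (s j \<circ> w) = insert (p, q) (inversions n w)"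
    by auto
  show "(p, q) \<notin> inversions n w"
    using assms by (simp add: inversions_def)
qed

lemma card_inversions_s_comp_ascent:
  assumes "inj w" "w p = j" "w q = Suc j" "p < q" "p \<in> {1..n}" "q \<in> {1..n}"
  shows "card (inversions n (s j \<circ> w)) = Suc (card (inversions n w))"
  using inversions_s_comp[OF assms] finite_inversions by simp

lemma card_inversions_s_comp_descent:
  assumes "inj w" "w p = j" "w q = Suc j" "q < p" "p \<in> {1..n}" "q \<in> {1..n}"
  shows "Suc (card (inversions n (s j \<circ> w))) = card (inversions n w)"
proof -
  have "card (inversions n (s j \<circ> (s j \<circ> w))) = Suc (card (inversions n (s j \<circ> w)))"
    by (rule card_inversions_s_comp_ascent[OF inj_compose[OF inj_s assms(1)]])
      (use assms in auto)
  moreover have "s j \<circ> (s j \<circ> w) = w"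
    by (simp add: fun_eq_iff)
  ultimately show ?thesis by simp
qed

lemma permutes_adjacent_preimages:
  assumes "w permutes {1..n}" "1 \<le> j" "j < n"
  obtains p q where "p \<in> {1..n}" "q \<in> {1..n}" "w p = j" "w q = Suc j" "p \<noteq> q"
proof -
  have "inv w j \<in> {1..n}" "inv w (Suc j) \<in> {1..n}"
    using permutes_in_image[OF permutes_inv[OF assms(1)]] assms(2,3) by auto
  moreover have "w (inv w j) = j" "w (inv w (Suc j)) = Suc j"
    using permutes_inverses(1)[OF assms(1)] by auto
  ultimately show ?thesis
    using that[of "inv w j" "inv w (Suc j)"] by (metis n_not_Suc_n)
qed

lemma card_inversions_s_comp_le:
  assumes "w permutes {1..n}" "1 \<le> j" "j < n"
  shows "card (inversions n (s j \<circ> w)) \<le> Suc (card (inversions n w))"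
proof -
  obtain p q where pq: "p \<in> {1..n}" "q \<in> {1..n}" "w p = j" "w q = Suc j" "p \<noteq> q"
    using permutes_adjacent_preimages[OF assms] .
  have "inj w" using assms(1) permutes_inj by blast
  consider "p < q" | "q < p" using pq(5) by linarith
  then show ?thesis
  proof cases
    case 1
    then show ?thesis using card_inversions_s_comp_ascent[OF \<open>inj w\<close> pq(3,4) _ pq(1,2)] by simp
  next
    case 2
    then show ?thesis using card_inversions_s_comp_descent[OF \<open>inj w\<close> pq(3,4) _ pq(1,2)] by simp
  qed
qed

lemma word_perm_permutes_card_inversions_le:
  assumes "set js \<subseteq> {1..<n}"
  shows "word_perm js permutes {1..n} \<and> card (inversions n (word_perm js)) \<le> length js"
  using assms
proof (induction js rule: rev_induct)
  case Nil
  have "inversions n id = {}" by (auto simp: inversions_def)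
  then show ?case using permutes_id[of "{1..n}"] by (simp add: id_def)
next
  case (snoc j js)
  then have IH: "word_perm js permutes {1..n}" "card (inversions n (word_perm js)) \<le> length js"
    and j: "1 \<le> j" "j < n" by auto
  show ?case
    unfolding word_perm_snoc
    using permutes_compose[OF IH(1) s_permutes[OF j]] card_inversions_s_comp_le[OF IH(1) j] IH(2)
    by (simp del: comp_apply)
qed

lemma permutes_no_inversions_imp_id:
  assumes "w permutes {1..n}" "inversions n w = {}"
  shows "w = id"
proof
  fix a
  have inj: "inj_on w A" for A using assms(1) permutes_inj inj_on_subset by blast
  have range: "w x \<in> {1..n} \<longleftrightarrow> x \<in> {1..n}" for x using permutes_in_image[OF assms(1)] .
  have mono: "w x < w y" if "x \<in> {1..n}" "y \<in> {1..n}" "x < y" for x y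
  proof -
    have "\<not> w y < w x" using assms(2) that by (auto simp: inversions_def)
    moreover have "w x \<noteq> w y" using inj[of UNIV] that by (auto dest: injD)
    ultimately show ?thesis by simp
  qed
  show "w a = id a"
  proof (cases "a \<in> {1..n}")
    case True
    have "w ` {1..a} \<subseteq> {1..w a}"
      using True mono range by (fastforce simp: le_less)
    then have "card {1..a} \<le> card {1..w a}" by (rule card_inj_on_le[OF inj]) simp
    moreover have "w ` {a..n} \<subseteq> {w a..n}"
      using True mono range by (fastforce simp: le_less)
    then have "card {a..n} \<le> card {w a..n}" by (rule card_inj_on_le[OF inj]) simp
    ultimately show ?thesis using True range[of a] by simp
  next
    case False
    then show ?thesis using permutes_not_in[OF assms(1)] by simp
  qed
qed

lemma permutes_inversion_imp_adjacent_descent: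
  assumes "w permutes {1..n}" "inversions n w \<noteq> {}"
  obtains j p q where "1 \<le> j" "j < n" "p \<in> {1..n}" "q \<in> {1..n}" "w p = j" "w q = Suc j" "q < p"
proof -
  obtain a b where ab: "a \<in> {1..n}" "b \<in> {1..n}" "a < b" "w b < w a"
    using assms(2) unfolding inversions_def by auto
  have w_inv: "w (inv w x) = x" "inv w (w x) = x" for x
    using permutes_inverses[OF assms(1)] by auto
  have inv_in: "inv w x \<in> {1..n} \<longleftrightarrow> x \<in> {1..n}" for x
    using permutes_in_image[OF permutes_inv[OF assms(1)]] .
  have "w b \<in> {1..n}" "w a \<in> {1..n}"
    using permutes_in_image[OF assms(1)] ab(1,2) by auto
  have "\<exists>v \<in> {w b..<w a}. inv w (Suc v) < inv w v"
  proof (rule ccontr)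
    assume "\<not> ?thesis"
    then have "inv w v \<le> inv w (Suc v)" if "v \<in> {w b..<w a}" for v
      using that by (simp add: not_less)
    then have "inv w (w b) \<le> inv w (w a)"
      by (rule lift_Suc_mono_le_ivl[where N = "{w b..<w a}"]) (use ab(4) in simp_all)
    then show False using ab(3) by (simp add: w_inv(2))
  qed
  then obtain v where v: "v \<in> {w b..<w a}" "inv w (Suc v) < inv w v" ..
  then have "1 \<le> v" "v < n"
    using \<open>w b \<in> {1..n}\<close> \<open>w a \<in> {1..n}\<close> by auto
  moreover have "inv w v \<in> {1..n}" "inv w (Suc v) \<in> {1..n}"
    using inv_in calculation by auto
  ultimately show ?thesis
    using that[of v "inv w v" "inv w (Suc v)"] w_inv(1) v(2) by blast
qed

lemma permutes_word_perm_of_card_inversions: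
  assumes "w permutes {1..n}"
  shows "\<exists>js. length js = card (inversions n w) \<and> set js \<subseteq> {1..<n} \<and> word_perm js = w"
  using assms
proof (induction "card (inversions n w)" arbitrary: w)
  case 0
  then have "w = id"
    using permutes_no_inversions_imp_id finite_inversions by simp
  then show ?case using "0.hyps" by (intro exI[of _ "[]"]) simp
next
  case (Suc k)
  then have "inversions n w \<noteq> {}" by auto
  then obtain j p q where jpq: "1 \<le> j" "j < n" "p \<in> {1..n}" "q \<in> {1..n}" "w p = j" "w q = Suc j" "q < p"
    using permutes_inversion_imp_adjacent_descent[OF Suc.prems] by blast
  have "k = card (inversions n (s j \<circ> w))"
    using card_inversions_s_comp_descent[OF permutes_inj[OF Suc.prems] jpq(5-7,3,4)] Suc.hyps(2)
    by simp
  moreover have "s j \<circ> w permutes {1..n}"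
    using permutes_compose[OF Suc.prems s_permutes[OF jpq(1,2)]] .
  ultimately obtain js where js: "length js = k" "set js \<subseteq> {1..<n}" "word_perm js = s j \<circ> w"
    using Suc.hyps(1) by metis
  have "word_perm (js @ [j]) = w"
    unfolding word_perm_snoc js(3) by (simp add: fun_eq_iff)
  then show ?case
    using js jpq(1,2) Suc.hyps(2) by (intro exI[of _ "js @ [j]"]) auto
qed

lemma coxeter_length_eq_card_inversions:
  assumes "w permutes {1..n}"
  shows "coxeter_length n w = card (inversions n w)"
  unfolding coxeter_length_def
proof (rule Least_equality)
  show "\<exists>js. length js = card (inversions n w) \<and> set js \<subseteq> {1..<n} \<and> word_perm js = w"
    using permutes_word_perm_of_card_inversions[OF assms] .
next
  fix k
  assume "\<exists>js. length js = k \<and> set js \<subseteq> {1..<n} \<and> word_perm js = w"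
  then show "card (inversions n w) \<le> k"
    using word_perm_permutes_card_inversions_le by blast
qed

lemma coxeter_length_s_comp_Suc_imp_ascent:
  assumes "w permutes {1..n}" "1 \<le> j" "j < n"
    and "coxeter_length n (s j \<circ> w) = Suc (coxeter_length n w)"
    and "w p = j" "w q = Suc j"
  shows "p < q"
proof (rule ccontr)
  assume "\<not> p < q"
  moreover have "p \<noteq> q" using assms(5,6) by (metis n_not_Suc_n)
  ultimately have "q < p" by simp
  have "w p \<in> {1..n}" "w q \<in> {1..n}"
    using assms(2,3,5,6) by auto
  then have "p \<in> {1..n}" "q \<in> {1..n}"
    using permutes_in_image[OF assms(1)] by blast+
  with card_inversions_s_comp_descent[OF permutes_inj[OF assms(1)] assms(5,6) \<open>q < p\<close>]
  have "Suc (card (inversions n (s j \<circ> w))) = card (inversions n w)" .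
  moreover have "s j \<circ> w permutes {1..n}"
    using permutes_compose[OF assms(1) s_permutes[OF assms(2,3)]] .
  ultimately show False
    using assms(4) coxeter_length_eq_card_inversions assms(1) by simp
qed

definition keeps_ascents :: "(nat \<Rightarrow> nat) \<Rightarrow> (nat \<Rightarrow> nat) \<Rightarrow> bool" where
  "keeps_ascents d d' \<longleftrightarrow> (\<forall>x y. x < y \<longrightarrow> d x < d y \<longrightarrow> d' x < d' y)"

lemma keeps_ascents_s_comp:
  assumes "w permutes {1..n}" "1 \<le> j" "j < n"
    and "coxeter_length n (s j \<circ> w) = Suc (coxeter_length n w)"
  shows "keeps_ascents (s j \<circ> w) w"
  unfolding keeps_ascents_def
proof (intro allI impI)
  fix x y
  assume "x < y" and asc: "(s j \<circ> w) x < (s j \<circ> w) y"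
  obtain p q where pq: "w p = j" "w q = Suc j"
    using permutes_adjacent_preimages[OF assms(1-3)] by blast
  have "{w x, w y} \<noteq> {j, Suc j}"
  proof
    assume "{w x, w y} = {j, Suc j}"
    with adjacent_values_pair[OF permutes_inj[OF assms(1)] pq] \<open>x < y\<close>
      coxeter_length_s_comp_Suc_imp_ascent[OF assms pq]
    have "x = p" "y = q" by auto
    then show False using asc pq by simp
  qed
  then show "w x < w y"
    using s_less_s_iff asc by auto
qed

lemma sorted_wrt_map_keeps_ascents:
  assumes "keeps_ascents d d'" "sorted_wrt (<) xs" "sorted_wrt (<) (map d xs)"
  shows "sorted_wrt (<) (map d' xs)"
  using assms(2,3) assms(1)[unfolded keeps_ascents_def] by (induction xs) auto

lemma row_standard_tab_act_keeps_ascents: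
  assumes "keeps_ascents d d'" "row_standard t" "row_standard (tab_act t d)"
  shows "row_standard (tab_act t d')"
  using assms sorted_wrt_map_keeps_ascents[OF assms(1)]
  by (auto simp: row_standard_def tab_act_def)

lemma first_col_increasing_tab_act_keeps_ascents:
  assumes "keeps_ascents d d'" "[] \<notin> set (fst t)"
    and "first_col_increasing t" "first_col_increasing (tab_act t d)"
  shows "first_col_increasing (tab_act t d')"
proof -
  have first_col: "[] \<notin> set rs \<Longrightarrow> map hd (map (map g) rs) = map g (map hd rs)"
    for rs :: "nat list list" and g :: "nat \<Rightarrow> nat"
    by (induction rs) (auto simp: hd_map)
  show ?thesis
    using assms(3,4) sorted_wrt_map_keeps_ascents[OF assms(1)]
    by (simp add: first_col_increasing_def tab_act_def first_col[OF assms(2)] del: map_map)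
qed

lemma row_standard_t_nu: "row_standard (t_nu n f)"
  by (auto simp: row_standard_def t_nu_def simp del: upt_Suc)

lemma first_col_increasing_t_nu: "first_col_increasing (t_nu n f)"
  by (simp add: first_col_increasing_def t_nu_def sorted_wrt_map)

lemma t_nu_rows_nonempty: "[] \<notin> set (fst (t_nu n f))"
  by (auto simp: t_nu_def)

lemma D_nu_keeps_ascents:
  assumes "d \<in> D_nu n f" "d' permutes {1..n}" "keeps_ascents d d'"
  shows "d' \<in> D_nu n f"
  using assms row_standard_tab_act_keeps_ascents[OF assms(3) row_standard_t_nu]
    first_col_increasing_tab_act_keeps_ascents[OF assms(3) t_nu_rows_nonempty first_col_increasing_t_nu]
  by (simp add: D_nu_def)

theorem lemma5p2:
  fixes n f j :: nat and d d' :: "nat \<Rightarrow> nat"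
  assumes "f \<le> n div 2"
    and "d \<in> D_nu n f"
    and "1 \<le> j" and "j \<le> n - 1"
    and "d' permutes {1..n}"
    and "d = rmult d' (s j)"
    and "coxeter_length n d = coxeter_length n d' + 1"
  shows "d' \<in> D_nu n f"
proof -
  have "j < n" using assms(3,4) by simp
  have "d = s j \<circ> d'" using assms(6) by (simp add: rmult_def)
  then have "keeps_ascents d d'"
    using keeps_ascents_s_comp[OF assms(5,3) \<open>j < n\<close>] assms(7) by simp
  then show ?thesis
    using D_nu_keeps_ascents[OF assms(2,5)] by blast
qed

end
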